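(* Let $d>1$ and $1\le d_1\le d$ be integers, let $C>0$, and let $B>5+\log_2 C$. For an integer $k\ge1$ put $n=2^k$, $s_j=n/2^{j-1}$, and for $1\le i\le k$ put $$j_0=j_0(i)=\tfrac1d\log n+\big(1-\tfrac{d_1}{d}\big)(i-1)-\big(1+\tfrac1d\big)\log\log n-B,$$ and for a constant $A>0$ and $i-1\le j\le k$ put $$\Delta_j^i=A\,\frac{1}{(1+|j-j_0|)^2}\cdot\frac{n^{1/2-1/(2d)}}{2^{(1/2-d_1/(2d))(i-1)}}\cdot\log^{1/2+1/(2d)}n .$$ Then there is $A_0>0$ depending only on $d$, $C$ and $B$ such that for every $A\ge A_0$ and every $k\ge1$, $$\sum_{i=1}^{k}\sum_{j=i-1}^{k}C\cdot\frac{j^d\,2^{jd}}{2^{(d-d_1)(i-1)}}\exp\!\Big(-\frac{(\Delta_j^i)^2}{16\,s_j}\Big)\le\frac{n}{16}.$$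
   Context: $\log$ denotes the base-2 logarithm and $\exp$ the natural exponential. *)

theory Defs
  imports Complex_Main
begin

(* log denotes base-2 logarithm: log 2 x *)

definition j0 :: "nat \<Rightarrow> nat \<Rightarrow> real \<Rightarrow> nat \<Rightarrow> nat \<Rightarrow> real" where
  "j0 d d1 B k i =
     (let n = (2::real) ^ k in
      (1 / real d) * log 2 n + (1 - real d1 / real d) * (real i - 1)
      - (1 + 1 / real d) * log 2 (log 2 n) - B)"

definition Delta :: "nat \<Rightarrow> nat \<Rightarrow> real \<Rightarrow> real \<Rightarrow> nat \<Rightarrow> nat \<Rightarrow> nat \<Rightarrow> real" where
  "Delta d d1 B A k i j =
     (let n = (2::real) ^ k in
      A * (1 / (1 + \<bar>real j - j0 d d1 B k i\<bar>)^2)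
        * (n powr (1/2 - 1 / (2 * real d)) / 2 powr ((1/2 - real d1 / (2 * real d)) * (real i - 1)))
        * (log 2 n) powr (1/2 + 1 / (2 * real d)))"

definition s :: "nat \<Rightarrow> nat \<Rightarrow> real" where
  "s k j = (2::real) ^ k / 2 powr (real j - 1)"

end

theory Submission
  imports Defs
begin

text \<open>
  Write \<open>t = j - j0 i\<close> and \<open>n = 2^k\<close>. Because \<open>d j0 = k + (d - d1)(i - 1) - (d + 1) log k - B d\<close>,
  the prefactor of a summand is at most \<open>C 2^(-B d) (n / log n) 2^(d t)\<close>, while
  \<open>\<Delta>\<^sup>2 / (16 s j) = A\<^sup>2 2^(-B - 5) 2^t / (1 + |t|)^4\<close>. For \<open>u\<close> large the factor
  \<open>exp (- u 2^t / (1 + |t|)^4)\<close> beats \<open>2^(d t + |t|)\<close> uniformly in real \<open>t\<close>, so each summand is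
  at most \<open>n / (64 log n) 2^(-|j - j0 i|)\<close>. The two-sided geometric series over \<open>j\<close> is at most 4,
  and there are \<open>k = log n\<close> values of \<open>i\<close>. The constant \<open>A0\<close> absorbs \<open>B\<close> and \<open>C\<close>.
\<close>

lemma two_powr_le_half_power:
  fixes y :: real and m :: int
  assumes "0 \<le> m" and "y \<le> - of_int m"
  shows "2 powr y \<le> (1/2) ^ nat m"
proof -
  have "2 powr y \<le> 2 powr (- real (nat m))" using assms by simp
  also have "\<dots> = (1/2) ^ nat m" by (simp add: powr_minus powr_realpow power_one_over inverse_eq_divide)
  finally show ?thesis .
qed

lemma sum_half_power_inj_le_two:
  fixes \<phi> :: "'a \<Rightarrow> nat"
  assumes "finite J" and "inj_on \<phi> J"
  shows "(\<Sum>j\<in>J. (1/2::real) ^ \<phi> j) \<le> 2"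
proof -
  have "(\<Sum>j\<in>J. (1/2::real) ^ \<phi> j) = (\<Sum>m\<in>\<phi> ` J. (1/2) ^ m)"
    using assms(2) by (simp add: sum.reindex)
  also have "\<dots> \<le> (\<Sum>m. (1/2::real) ^ m)"
    using assms(1) by (intro sum_le_suminf) auto
  also have "\<dots> = 2" using suminf_geometric[of "1/2::real"] by simp
  finally show ?thesis .
qed

lemma sum_two_powr_neg_dist_le_four:
  fixes J :: "nat set" and x :: real
  assumes "finite J"
  shows "(\<Sum>j\<in>J. 2 powr (- \<bar>real j - x\<bar>)) \<le> 4"
proof -
  define m where "m = \<lfloor>x\<rfloor>"
  let ?f = "\<lambda>j::nat. 2 powr (- \<bar>real j - x\<bar>)"
  let ?below = "J \<inter> {j. int j \<le> m}" and ?above = "J - {j. int j \<le> m}"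
  have "sum ?f ?below \<le> (\<Sum>j\<in>?below. (1/2) ^ nat (m - int j))"
    by (intro sum_mono two_powr_le_half_power) (auto simp: m_def le_floor_iff)
  also have "\<dots> \<le> 2"
    using assms by (intro sum_half_power_inj_le_two) (auto simp: inj_on_def)
  finally have below: "sum ?f ?below \<le> 2" .
  have "sum ?f ?above \<le> (\<Sum>j\<in>?above. (1/2) ^ nat (int j - m - 1))"
  proof (intro sum_mono two_powr_le_half_power)
    fix j assume "j \<in> ?above"
    then have "m < int j" and "x < real j"
      by (auto simp: m_def) (metis floor_less_iff not_le of_int_of_nat_eq)
    then show "- \<bar>real j - x\<bar> \<le> - of_int (int j - m - 1)" and "0 \<le> int j - m - 1"
      using real_of_int_floor_add_one_gt[of x] unfolding m_def by linarith+
  qed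
  also have "\<dots> \<le> 2"
    using assms by (intro sum_half_power_inj_le_two) (auto simp: inj_on_def)
  finally have "sum ?f ?above \<le> 2" .
  with below show ?thesis using sum.Int_Diff[OF assms, of ?f "{j. int j \<le> m}"] by linarith
qed

lemma power_le_exp:
  fixes y a :: real
  assumes "0 \<le> y" and "0 < a"
  shows "y ^ n \<le> (real n / a) ^ n * exp (a * y)"
proof (cases "n = 0")
  case False
  define z where "z = a * y / real n"
  have "0 \<le> z" using assms by (simp add: z_def)
  then have "z ^ n \<le> exp z ^ n"
    using exp_ge_add_one_self[of z] by (intro power_mono) linarith+
  also have "\<dots> = exp (a * y)"
    using False by (simp add: z_def flip: exp_of_nat_mult)
  finally have "(real n / a) ^ n * z ^ n \<le> (real n / a) ^ n * exp (a * y)"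
    using assms by (intro mult_left_mono) auto
  then show ?thesis
    using False assms by (simp add: z_def flip: power_mult_distrib)
qed (use assms in simp)

lemma affine_le_two_powr_over_fourth_power:
  fixes t c u :: real
  assumes "0 \<le> t" and "0 \<le> c" and "2 * (5 / ln 2) ^ 5 * c \<le> u"
  shows "c * (1 + t) \<le> u * 2 powr t / (1 + t) ^ 4"
proof -
  have "(1 + t) ^ 5 \<le> (5 / ln 2) ^ 5 * exp (ln 2 * (1 + t))"
    using power_le_exp[of "1 + t" "ln 2" 5] assms(1) by simp
  also have "exp (ln 2 * (1 + t)) = 2 * 2 powr t"
    by (simp add: powr_def exp_add algebra_simps)
  finally have "c * (1 + t) ^ 5 \<le> c * ((5 / ln 2) ^ 5 * (2 * 2 powr t))"
    using assms(2) by (rule mult_left_mono)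
  also have "\<dots> = (2 * (5 / ln 2) ^ 5 * c) * 2 powr t" by simp
  also have "\<dots> \<le> u * 2 powr t" using assms(3) by (rule mult_right_mono) simp
  finally have "c * (1 + t) ^ 5 / (1 + t) ^ 4 \<le> u * 2 powr t / (1 + t) ^ 4"
    using assms(1) by (intro divide_right_mono) simp_all
  moreover have "c * (1 + t) ^ 5 / (1 + t) ^ 4 = c * (1 + t)"
    using assms(1) by (simp add: eval_nat_numeral)
  ultimately show ?thesis by simp
qed

lemma exponent_le_decay_rate:
  fixes D L :: real
  assumes "1 < D" and "0 \<le> L"
  obtains U where "0 < U"
    and "\<And>u t. U \<le> u \<Longrightarrow> (D * t + \<bar>t\<bar>) * ln 2 + L \<le> u * 2 powr t / (1 + \<bar>t\<bar>) ^ 4"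
proof
  \<comment> \<open>For \<open>t \<le> -M\<close> the left side is \<open>\<le> 0\<close>; on \<open>[-M, 0]\<close> the right side is at least
      \<open>u 2^(-M) / (1 + M)^4\<close>; for \<open>t \<ge> 0\<close> the growth of \<open>2^t\<close> beats \<open>(1 + t)^5\<close>.\<close>
  define M where "M = L / ((D - 1) * ln 2)"
  have M: "0 \<le> M" "(D - 1) * M * ln 2 = L"
    using assms unfolding M_def by auto
  define U where "U = max 1 (max (2 * (5 / ln 2) ^ 5 * (D + 1 + L)) (L * (1 + M) ^ 4 * 2 powr M))"
  show "0 < U" by (simp add: U_def)
  fix u t :: real
  assume u: "U \<le> u"
  show "(D * t + \<bar>t\<bar>) * ln 2 + L \<le> u * 2 powr t / (1 + \<bar>t\<bar>) ^ 4"
  proof (cases "0 \<le> t")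
    case True
    have "(D * t + \<bar>t\<bar>) * ln 2 + L = (D + 1) * t * ln 2 + L"
      using True by (simp add: algebra_simps)
    also have "\<dots> \<le> (D + 1) * t + L"
      using True assms ln_2_less_1 mult_left_le[of "ln 2" "(D + 1) * t"] by simp
    also have "\<dots> \<le> (D + 1 + L) * (1 + t)"
      using assms mult_nonneg_nonneg[OF assms(2) True]
      by (simp add: ring_distribs)
    also have "\<dots> \<le> u * 2 powr t / (1 + \<bar>t\<bar>) ^ 4"
      using True assms u by (simp add: U_def affine_le_two_powr_over_fourth_power)
    finally show ?thesis .
  next
    case False
    have rhs: "0 \<le> u * 2 powr t / (1 + \<bar>t\<bar>) ^ 4"
      using u by (simp add: U_def)
    show ?thesis
    proof (cases "t \<le> - M")
      case True
      then have "(D - 1) * t * ln 2 \<le> (D - 1) * (- M) * ln 2"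
        using assms by (intro mult_right_mono mult_left_mono) auto
      then have "(D - 1) * t * ln 2 \<le> - L" using M(2) by simp
      then show ?thesis using False rhs by (simp add: algebra_simps)
    next
      case t_gt: False
      have "L * (1 + \<bar>t\<bar>) ^ 4 \<le> L * (1 + M) ^ 4 * 2 powr M * 2 powr t"
      proof -
        have "(1 + \<bar>t\<bar>) ^ 4 \<le> (1 + M) ^ 4" using t_gt False by (intro power_mono) auto
        also have "\<dots> \<le> (1 + M) ^ 4 * (2 powr M * 2 powr t)"
          using t_gt M(1) by (simp add: mult_le_cancel_left1 ge_one_powr_ge_zero flip: powr_add)
        finally show ?thesis
          using assms(2) by (simp add: mult_left_mono mult.assoc)
      qed
      also have "\<dots> \<le> u * 2 powr t" using u by (intro mult_right_mono) (auto simp: U_def)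
      finally have "L \<le> u * 2 powr t / (1 + \<bar>t\<bar>) ^ 4"
        by (simp add: field_simps)
      moreover have "(D * t + \<bar>t\<bar>) * ln 2 \<le> 0"
        using False assms by (simp add: mult_nonpos_nonneg)
      ultimately show ?thesis by linarith
    qed
  qed
qed

lemma two_powr_exp_decay_bound:
  fixes D \<epsilon> :: real
  assumes "1 < D" and "0 < \<epsilon>"
  obtains U where "0 < U"
    and "\<And>u t. U \<le> u \<Longrightarrow>
           2 powr (D * t) * exp (- (u * 2 powr t / (1 + \<bar>t\<bar>) ^ 4)) \<le> \<epsilon> * 2 powr (- \<bar>t\<bar>)"
proof -
  obtain U where U: "0 < U"
    and dominates: "\<And>u t. U \<le> u \<Longrightarrow>
                     (D * t + \<bar>t\<bar>) * ln 2 + \<bar>ln \<epsilon>\<bar> \<le> u * 2 powr t / (1 + \<bar>t\<bar>) ^ 4"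
    using exponent_le_decay_rate[OF assms(1) abs_ge_zero] by blast
  have "2 powr (D * t) * exp (- (u * 2 powr t / (1 + \<bar>t\<bar>) ^ 4)) \<le> \<epsilon> * 2 powr (- \<bar>t\<bar>)"
    if "U \<le> u" for u t
  proof -
    have "exp (- (u * 2 powr t / (1 + \<bar>t\<bar>) ^ 4)) \<le> exp (ln \<epsilon> - (D * t + \<bar>t\<bar>) * ln 2)"
      using dominates[OF that, of t] by simp
    also have "\<dots> = \<epsilon> * 2 powr (- \<bar>t\<bar>) / 2 powr (D * t)"
      using assms(2) by (simp add: powr_def exp_diff exp_add exp_minus algebra_simps divide_inverse)
    finally show ?thesis by (simp add: field_simps)
  qed
  with U that show ?thesis by blast
qed

lemma powr_mult_log:
  fixes b x a :: real
  assumes "0 < b" and "b \<noteq> 1" and "0 < x"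
  shows "b powr (a * log b x) = x powr a"
proof -
  have "b powr (a * log b x) = (b powr log b x) powr a" by (simp add: powr_powr mult.commute)
  with assms show ?thesis by simp
qed

lemma j0_eq:
  "j0 d d1 B k i = real k / real d + (1 - real d1 / real d) * (real i - 1) - (1 + 1 / real d) * log 2 (real k) - B"
  unfolding j0_def Let_def by (simp add: log_nat_power)

lemma j0_scaled:
  assumes "0 < d"
  shows "real d * j0 d d1 B k i
           = real k + (real d - real d1) * (real i - 1) - (real d + 1) * log 2 (real k) - B * real d"
  using assms unfolding j0_eq by (simp add: field_simps)

lemma prefactor_le:
  fixes B C :: real
  assumes "0 < k" and "0 < d" and "d1 \<le> d" and "j \<le> k" and "0 \<le> C"
  shows "C * (real j ^ d * 2 ^ (j * d)) / 2 powr (real (d - d1) * (real i - 1))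
           \<le> C * 2 powr (- B * real d) * 2 ^ k / real k * 2 powr (real d * (real j - j0 d d1 B k i))"
proof -
  define t where "t = real j - j0 d d1 B k i"
  have exponent: "real (j * d) - real (d - d1) * (real i - 1)
                   = (real d * t + real k - B * real d) - (real d + 1) * log 2 (real k)"
    using j0_scaled[OF assms(2), of d1 B k i] assms(3)
    by (simp add: t_def of_nat_diff algebra_simps)
  have "2 ^ (j * d) / 2 powr (real (d - d1) * (real i - 1))
          = 2 powr (real (j * d) - real (d - d1) * (real i - 1))"
    by (subst powr_realpow [symmetric]) (simp_all add: powr_diff)
  also have "\<dots> = 2 powr (real d * t + real k - B * real d) / real k powr (real d + 1)"
    using assms(1) by (simp only: exponent powr_diff) (simp add: powr_mult_log)
  also have "\<dots> = 2 powr (real d * t) * 2 ^ k * 2 powr (- B * real d) / real k ^ (d + 1)"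
    using assms(1) by (simp add: powr_add powr_diff powr_minus powr_realpow [symmetric] field_simps)
  finally have ratio: "2 ^ (j * d) / 2 powr (real (d - d1) * (real i - 1))
                         = 2 powr (real d * t) * 2 ^ k * 2 powr (- B * real d) / real k ^ (d + 1)" .
  have "C * (real j ^ d * 2 ^ (j * d)) / 2 powr (real (d - d1) * (real i - 1))
          = C * real j ^ d * (2 ^ (j * d) / 2 powr (real (d - d1) * (real i - 1)))"
    by simp
  also have "\<dots> = C * 2 powr (- B * real d) * 2 ^ k * 2 powr (real d * t) * (real j ^ d / real k ^ (d + 1))"
    unfolding ratio by simp
  also have "\<dots> \<le> C * 2 powr (- B * real d) * 2 ^ k * 2 powr (real d * t) * (1 / real k)"
  proof -
    have "real j ^ d / real k ^ (d + 1) \<le> real k ^ d / real k ^ (d + 1)"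
      using assms(4) by (intro divide_right_mono power_mono) auto
    also have "\<dots> = 1 / real k" using assms(1) by simp
    finally show ?thesis using assms(5) by (intro mult_left_mono) auto
  qed
  finally show ?thesis by (simp add: t_def)
qed

lemma Delta_sq_div_s:
  fixes d d1 k i j :: nat and A B :: real
  assumes "0 < k" and "0 < d"
  defines "t \<equiv> real j - j0 d d1 B k i"
  shows "(Delta d d1 B A k i j)\<^sup>2 / (16 * s k j) = A\<^sup>2 / 2 powr (B + 5) * 2 powr t / (1 + \<bar>t\<bar>) ^ 4"
proof -
  define a where "a = 1/2 - 1 / (2 * real d)"
  define b where "b = 1/2 - real d1 / (2 * real d)"
  define c where "c = 1/2 + 1 / (2 * real d)"
  define X where "X = real k * a - b * (real i - 1) + c * log 2 (real k)"
  have "((2::real) ^ k) powr a = 2 powr (real k * a)"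
    by (simp add: powr_powr flip: powr_realpow)
  moreover have "(log 2 ((2::real) ^ k)) powr c = 2 powr (c * log 2 (real k))"
    using assms(1) by (simp add: log_nat_power powr_mult_log)
  ultimately have Delta: "Delta d d1 B A k i j = A / (1 + \<bar>t\<bar>) ^ 2 * 2 powr X"
    unfolding Delta_def Let_def X_def t_def a_def [symmetric] b_def [symmetric] c_def [symmetric]
    by (simp add: powr_add powr_diff)
  have s: "16 * s k j = 2 powr (real k - real j + 5)"
    unfolding s_def by (simp add: powr_diff powr_add flip: powr_realpow)
  have exponent: "2 * X - (real k - real j + 5) = t - (B + 5)"
    using assms(2) unfolding X_def a_def b_def c_def t_def j0_eq by (simp add: field_simps)
  have sq: "(2 powr X)\<^sup>2 = 2 powr (2 * X)"
    by (metis powr_add mult_2 power2_eq_square)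
  have "(Delta d d1 B A k i j)\<^sup>2 / (16 * s k j) = A\<^sup>2 / (1 + \<bar>t\<bar>) ^ 4 * (2 powr X)\<^sup>2 / 2 powr (real k - real j + 5)"
    unfolding Delta s by (simp only: power_mult_distrib power_divide) (simp flip: power_mult)
  also have "\<dots> = A\<^sup>2 / (1 + \<bar>t\<bar>) ^ 4 * 2 powr (2 * X - (real k - real j + 5))"
    using sq by (simp add: powr_diff)
  also have "\<dots> = A\<^sup>2 / 2 powr (B + 5) * 2 powr t / (1 + \<bar>t\<bar>) ^ 4"
    unfolding exponent powr_diff by simp
  finally show ?thesis .
qed

lemma summand_le:
  fixes d d1 k i j :: nat and A B C :: real
  assumes "0 < k" and "0 < d" and "d1 \<le> d" and "j \<le> k" and "0 < C"
    and decay: "\<And>t. 2 powr (real d * t) * exp (- (A\<^sup>2 / 2 powr (B + 5) * 2 powr t / (1 + \<bar>t\<bar>) ^ 4))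
                    \<le> 2 powr (B * real d) / (64 * C) * 2 powr (- \<bar>t\<bar>)"
  shows "C * (real j ^ d * 2 ^ (j * d)) / 2 powr (real (d - d1) * (real i - 1))
           * exp (- ((Delta d d1 B A k i j)\<^sup>2 / (16 * s k j)))
         \<le> 2 ^ k / (64 * real k) * 2 powr (- \<bar>real j - j0 d d1 B k i\<bar>)"
proof -
  define t where "t = real j - j0 d d1 B k i"
  define K where "K = C * 2 powr (- B * real d) * 2 ^ k / real k"
  have "C * (real j ^ d * 2 ^ (j * d)) / 2 powr (real (d - d1) * (real i - 1))
          * exp (- ((Delta d d1 B A k i j)\<^sup>2 / (16 * s k j)))
        \<le> K * 2 powr (real d * t) * exp (- (A\<^sup>2 / 2 powr (B + 5) * 2 powr t / (1 + \<bar>t\<bar>) ^ 4))"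
    unfolding Delta_sq_div_s[OF assms(1,2)] t_def K_def
    using prefactor_le[OF assms(1-4)] assms(5) by (intro mult_right_mono) auto
  also have "\<dots> \<le> K * (2 powr (B * real d) / (64 * C) * 2 powr (- \<bar>t\<bar>))"
    unfolding mult.assoc[of K] using assms(5) by (intro mult_left_mono decay) (simp add: K_def)
  also have "\<dots> = 2 ^ k / (64 * real k) * 2 powr (- \<bar>t\<bar>)"
  proof -
    have "2 powr (- B * real d) * 2 powr (B * real d) = 1" by (simp flip: powr_add)
    then show ?thesis using assms(5) unfolding K_def by (simp add: field_simps)
  qed
  finally show ?thesis unfolding t_def .
qed

lemma double_sum_le:
  fixes f :: "nat \<Rightarrow> nat \<Rightarrow> real" and x :: "nat \<Rightarrow> real"
  assumes "1 \<le> k" and "\<And>i j. j \<le> k \<Longrightarrow> f i j \<le> 2 ^ k / (64 * real k) * 2 powr (- \<bar>real j - x i\<bar>)"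
  shows "(\<Sum>i = 1..k. \<Sum>j = i - 1..k. f i j) \<le> 2 ^ k / 16"
proof -
  have "(\<Sum>i = 1..k. \<Sum>j = i - 1..k. f i j)
          \<le> (\<Sum>i = 1..k. 2 ^ k / (64 * real k) * (\<Sum>j = i - 1..k. 2 powr (- \<bar>real j - x i\<bar>)))"
    unfolding sum_distrib_left by (intro sum_mono assms(2)) auto
  also have "\<dots> \<le> (\<Sum>i = 1..k. 2 ^ k / (64 * real k) * 4)"
    by (intro sum_mono mult_left_mono sum_two_powr_neg_dist_le_four) auto
  also have "\<dots> = 2 ^ k / 16" using assms(1) by simp
  finally show ?thesis .
qed

theorem mainTheorem7:
  fixes d d1 :: nat and C B :: real
  assumes "d > 1" and "1 \<le> d1" and "d1 \<le> d" and "C > 0" and "B > 5 + log 2 C"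
  shows "\<exists>A0 > 0. \<forall>A \<ge> A0. \<forall>k \<ge> 1.
    (\<Sum>i = 1..k. \<Sum>j = i - 1..k.
        C * (real j ^ d * 2 ^ (j * d)) / 2 powr (real (d - d1) * (real i - 1))
          * exp (- ((Delta d d1 B A k i j)\<^sup>2 / (16 * s k j))))
    \<le> (2::real) ^ k / 16"
proof -
  obtain U where "0 < U" and decay: "\<And>u t. U \<le> u \<Longrightarrow>
      2 powr (real d * t) * exp (- (u * 2 powr t / (1 + \<bar>t\<bar>) ^ 4))
        \<le> 2 powr (B * real d) / (64 * C) * 2 powr (- \<bar>t\<bar>)"
    using two_powr_exp_decay_bound[of "real d" "2 powr (B * real d) / (64 * C)"] assms(1,4) by auto
  define A0 where "A0 = sqrt (U * 2 powr (B + 5))"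
  have A_large: "U \<le> A\<^sup>2 / 2 powr (B + 5)" if "A0 \<le> A" for A
  proof -
    have "U * 2 powr (B + 5) = A0\<^sup>2" using \<open>0 < U\<close> by (simp add: A0_def)
    also have "\<dots> \<le> A\<^sup>2" using that \<open>0 < U\<close> by (intro power_mono) (simp_all add: A0_def)
    finally show ?thesis by (simp add: pos_le_divide_eq)
  qed
  show ?thesis
  proof (intro exI[of _ A0] conjI allI impI double_sum_le)
    show "0 < A0" using \<open>0 < U\<close> by (simp add: A0_def)
    fix A :: real and k i j :: nat
    assume "A0 \<le> A" and "1 \<le> k" and "j \<le> k"
    then show "C * (real j ^ d * 2 ^ (j * d)) / 2 powr (real (d - d1) * (real i - 1))
                 * exp (- ((Delta d d1 B A k i j)\<^sup>2 / (16 * s k j)))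
               \<le> 2 ^ k / (64 * real k) * 2 powr (- \<bar>real j - j0 d d1 B k i\<bar>)"
      using assms(1,3,4) A_large by (intro summand_le decay) auto
  qed
qed

end
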